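(* Let $f_1$ admit a Taylor expansion $f_1(t)=\sum_{m\ge0}b_mt^m$ on $[-1,1]$ with coefficients satisfying $c_2r^m\le b_m\le c_1r^m$ for all $m\ge0$, for some constants $0<r<1$ and $0<c_2\le c_1$. Then for every integer $\alpha\ge1$ there exist constants $C_{1,\alpha},C_{2,\alpha}>0$ (depending only on $\alpha$, $d$, and the constants $r,c_1,c_2$) such that for all $m\ge0$ $$C_{2,\alpha}\Big(\frac r4\Big)^m\le\lambda_{m,\alpha}\le C_{1,\alpha}(m+1)^{\alpha-1}r^m.$$
   Context: $d\ge2$; $|S^{d-2}|$ is the surface area of the unit sphere $S^{d-2}$. For integers $k,\alpha\ge0$, $b_{j,\alpha}$ denotes the coefficient of $t^j$ in the power series of $f_1^\alpha$, and $$\lambda_{k,\alpha}=\frac{|S^{d-2}|\Gamma((d-1)/2)}{2^{k+1}}\sum_{s\ge0}b_{2s+k,\alpha}\frac{(2s+k)!}{(2s)!}\frac{\Gamma(s+1/2)}{\Gamma(s+k+d/2)}$$ (this is the eigenvalue of the integral operator of the dot-product kernel $(x,x')\mapsto f_1^\alpha(\langle x,x'\rangle)$ on $L_2(S^{d-1},\sigma_{d-1})$ on spherical harmonics of degree $k$). *)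

theory Defs
  imports "HOL-Analysis.Analysis" "HOL-Computational_Algebra.Formal_Power_Series"
begin

text \<open>Surface area of the unit sphere S^n in R^(n+1): 2 pi^((n+1)/2) / Gamma((n+1)/2).
  For n = 0 this is 2 (counting measure on S^0 = {-1,1}).\<close>
definition sphere_area :: "nat \<Rightarrow> real" where
  "sphere_area n = 2 * pi powr ((real n + 1) / 2) / Gamma ((real n + 1) / 2)"

definition pow_coeff :: "(nat \<Rightarrow> real) \<Rightarrow> nat \<Rightarrow> nat \<Rightarrow> real" where
  "pow_coeff b j \<alpha> = fps_nth ((Abs_fps b) ^ \<alpha>) j"

text \<open>lambda_{k,alpha} for the dot-product kernel f_1^alpha on S^(d-1).\<close>
definition eig :: "nat \<Rightarrow> (nat \<Rightarrow> real) \<Rightarrow> nat \<Rightarrow> nat \<Rightarrow> real" where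
  "eig d b k \<alpha> =
     sphere_area (d - 2) * Gamma ((real d - 1) / 2) / 2 ^ (k + 1) *
     (\<Sum>s. pow_coeff b (2 * s + k) \<alpha> * (fact (2 * s + k) / fact (2 * s)) *
           (Gamma (real s + 1 / 2) / Gamma (real s + real k + real d / 2)))"

end

theory Submission imports Defs begin

text \<open>Writing lambda_{k,alpha} as a series sum_s b_{2s+k,alpha} w_k(s) with explicit Gamma weights,
  everything reduces to two-sided bounds on the weights and on the coefficients of f_1^alpha.
  Convolution gives c_2^alpha r^j <= b_{j,alpha} <= c_1^alpha r^j (j+1)^(alpha-1). Via
  Gamma(z+n) = (z)_n Gamma(z) each weight is a product of two Pochhammer ratios and is at most
  2^k Gamma(1/2)/Gamma(d/2); so the series is dominated by (k+1)^(alpha-1) r^k times the convergent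
  sum_s (s+1)^(alpha-1) r^(2s), which with the prefactor 2^-(k+1) gives the upper bound. For the
  lower bound the term s = 0 suffices: its weight k! Gamma(1/2)/Gamma(k+d/2) is at least a constant
  times 2^-k because (d/2)_k <= 2^(d-1+k) k!, and with the prefactor this yields (r/4)^k.\<close>

lemma fps_power_Suc_nth:
  "fps_nth (Abs_fps b ^ Suc n) j = (\<Sum>i=0..j. b i * fps_nth (Abs_fps b ^ n) (j - i))"
  by (simp only: power_Suc fps_mult_nth) simp

lemma fps_power_nth_nonneg:
  fixes b :: "nat \<Rightarrow> 'a::linordered_semidom"
  assumes "\<And>m. 0 \<le> b m"
  shows "0 \<le> fps_nth (Abs_fps b ^ n) j"
proof (induction n arbitrary: j)
  case 0
  then show ?case by simp
next
  case (Suc n)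
  then show ?case
    unfolding fps_power_Suc_nth using assms by (intro sum_nonneg mult_nonneg_nonneg) auto
qed

lemma fps_power_nth_lower:
  fixes b :: "nat \<Rightarrow> real"
  assumes b: "\<And>m. c * r ^ m \<le> b m" and "0 \<le> c" "0 \<le> r"
  shows "c ^ Suc n * r ^ j \<le> fps_nth (Abs_fps b ^ Suc n) j"
proof (induction n arbitrary: j)
  case 0
  then show ?case using b by simp
next
  case (Suc n)
  have b_nonneg: "0 \<le> b m" for m
    using b[of m] \<open>0 \<le> c\<close> \<open>0 \<le> r\<close> by (meson order.trans zero_le_mult_iff zero_le_power)
  have "c ^ Suc (Suc n) * r ^ j = (c * r ^ 0) * (c ^ Suc n * r ^ j)"
    by simp
  also have "\<dots> \<le> b 0 * fps_nth (Abs_fps b ^ Suc n) (j - 0)"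
    using Suc.IH[of j] b[of 0] \<open>0 \<le> c\<close> \<open>0 \<le> r\<close> by (intro mult_mono) auto
  also have "\<dots> \<le> (\<Sum>i=0..j. b i * fps_nth (Abs_fps b ^ Suc n) (j - i))"
    using b_nonneg fps_power_nth_nonneg[of b]
    by (intro member_le_sum[of 0 "{0..j}"]) (auto intro!: mult_nonneg_nonneg simp del: power_Suc)
  finally show ?case
    by (simp only: fps_power_Suc_nth)
qed

lemma fps_power_nth_upper:
  fixes b :: "nat \<Rightarrow> real"
  assumes b_nonneg: "\<And>m. 0 \<le> b m" and b: "\<And>m. b m \<le> c * r ^ m" and "0 \<le> r"
  shows "fps_nth (Abs_fps b ^ Suc n) j \<le> c ^ Suc n * r ^ j * (real j + 1) ^ n"
proof (induction n arbitrary: j)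
  case 0
  then show ?case using b by simp
next
  case (Suc n)
  have "0 \<le> c"
    using b_nonneg[of 0] b[of 0] by simp
  have term_le: "b i * fps_nth (Abs_fps b ^ Suc n) (j - i) \<le> c ^ Suc (Suc n) * r ^ j * (real j + 1) ^ n"
    if "i \<le> j" for i
  proof -
    have "b i * fps_nth (Abs_fps b ^ Suc n) (j - i)
        \<le> (c * r ^ i) * (c ^ Suc n * r ^ (j - i) * (real (j - i) + 1) ^ n)"
      using Suc.IH[of "j - i"] b[of i] b_nonneg[of i] \<open>0 \<le> c\<close> \<open>0 \<le> r\<close>
        fps_power_nth_nonneg[of b "Suc n" "j - i", OF b_nonneg]
      by (intro mult_mono) auto
    also have "\<dots> = c ^ Suc (Suc n) * r ^ j * (real (j - i) + 1) ^ n"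
      using that by (simp add: power_add[symmetric] algebra_simps)
    also have "\<dots> \<le> c ^ Suc (Suc n) * r ^ j * (real j + 1) ^ n"
      using that \<open>0 \<le> c\<close> \<open>0 \<le> r\<close> by (intro mult_left_mono power_mono) auto
    finally show ?thesis .
  qed
  have "(\<Sum>i=0..j. b i * fps_nth (Abs_fps b ^ Suc n) (j - i))
      \<le> (\<Sum>i=0..j. c ^ Suc (Suc n) * r ^ j * (real j + 1) ^ n)"
    by (intro sum_mono term_le) auto
  also have "\<dots> = c ^ Suc (Suc n) * r ^ j * (real j + 1) ^ Suc n"
    by (simp add: algebra_simps)
  finally show ?case
    by (simp only: fps_power_Suc_nth)
qed

text \<open>These are the coefficients of the a-th derivative of the geometric series.\<close>

lemma diffs_iterate_one: "((diffs ^^ a) (\<lambda>_. 1::real)) n = pochhammer (real n + 1) a"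
proof (induction a arbitrary: n)
  case 0
  then show ?case by simp
next
  case (Suc a)
  then show ?case
    by (simp add: diffs_def pochhammer_rec add_ac)
qed

lemma summable_diffs_iterate_one:
  "norm (x::real) < 1 \<Longrightarrow> summable (\<lambda>n. ((diffs ^^ a) (\<lambda>_. 1)) n * x ^ n)"
proof (induction a arbitrary: x)
  case 0
  then show ?case by simp
next
  case (Suc a)
  then show ?case
    using termdiff_converges[of x 1 "(diffs ^^ a) (\<lambda>_. 1)"] by simp
qed

lemma summable_power_times_geometric:
  fixes x :: real
  assumes "0 \<le> x" "x < 1"
  shows "summable (\<lambda>n. (real n + 1) ^ a * x ^ n)"
proof (rule summable_comparison_test)
  show "summable (\<lambda>n. ((diffs ^^ a) (\<lambda>_. 1::real)) n * x ^ n)"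
    using assms by (intro summable_diffs_iterate_one) simp
  have "(real n + 1) ^ a \<le> pochhammer (real n + 1) a" for n
  proof -
    have "(real n + 1) ^ a = (\<Prod>i = 0..<a. real n + 1)"
      by simp
    also have "\<dots> \<le> pochhammer (real n + 1) a"
      unfolding pochhammer_prod by (intro prod_mono) auto
    finally show ?thesis .
  qed
  then show "\<exists>N. \<forall>n\<ge>N. norm ((real n + 1) ^ a * x ^ n) \<le> ((diffs ^^ a) (\<lambda>_. 1)) n * x ^ n"
    using assms by (auto simp: diffs_iterate_one abs_mult intro!: mult_right_mono)
qed

lemma Gamma_add_of_nat:
  assumes "0 < z"
  shows "Gamma (z + real n) = pochhammer z n * Gamma z"
proof -
  have "z \<notin> \<int>\<^sub>\<le>\<^sub>0"
    using assms by (auto elim!: nonpos_Ints_cases)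
  then show ?thesis
    using pochhammer_Gamma[of z n] Gamma_real_pos[OF assms] by simp
qed

lemma pochhammer_le_pow2_fact:
  assumes "0 \<le> h" "h \<le> real n + 1"
  shows "pochhammer h k \<le> 2 ^ (n + k) * fact k"
proof -
  have "pochhammer h k \<le> pochhammer (real n + 1) k"
    unfolding pochhammer_prod using assms by (intro prod_mono) auto
  also have "\<dots> = fact (n + k) / fact n"
    unfolding pochhammer_fact pochhammer_product'
    using pochhammer_pos[of "1::real" n] by (simp add: add.commute)
  also have "\<dots> = fact k * real ((n + k) choose k)"
    by (simp add: binomial_fact)
  also have "\<dots> \<le> fact k * 2 ^ (n + k)"
    using binomial_le_pow2[of "n + k" k] by (intro mult_left_mono) (auto simp flip: of_nat_le_iff)
  finally show ?thesis by (simp add: mult.commute)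
qed

definition eig_weight :: "real \<Rightarrow> nat \<Rightarrow> nat \<Rightarrow> real" where
  "eig_weight h k s =
     fact (2 * s + k) / fact (2 * s) * (Gamma (real s + 1 / 2) / Gamma (real s + real k + h))"

lemma eig_weight_pochhammer:
  assumes "0 < h"
  shows "eig_weight h k s =
    pochhammer (real (2 * s) + 1) k / pochhammer (real s + h) k *
    (pochhammer (1 / 2) s / pochhammer h s) * (Gamma (1 / 2) / Gamma h)"
proof -
  have "Gamma (real s + real k + h) = pochhammer (real s + h) k * pochhammer h s * Gamma h"
    using Gamma_add_of_nat[of "real s + h" k] Gamma_add_of_nat[of h s] assms by (simp add: add_ac)
  moreover have "Gamma (real s + 1 / 2) = pochhammer (1 / 2) s * Gamma (1 / 2)"
    using Gamma_add_of_nat[of "1 / 2" s] by (simp add: add_ac)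
  moreover have "(fact (2 * s + k) :: real) = fact (2 * s) * pochhammer (real (2 * s) + 1) k"
    using pochhammer_product'[of 1 "2 * s" k] by (simp add: pochhammer_fact add_ac)
  ultimately show ?thesis
    unfolding eig_weight_def by (simp add: field_simps)
qed

lemma eig_weight_nonneg: "0 < h \<Longrightarrow> 0 \<le> eig_weight h k s"
  by (simp add: eig_weight_pochhammer pochhammer_pos less_imp_le)

lemma eig_weight_le:
  assumes "1 / 2 \<le> h"
  shows "eig_weight h k s \<le> 2 ^ k * (Gamma (1 / 2) / Gamma h)"
proof -
  have "pochhammer (real (2 * s) + 1) k \<le> (\<Prod>i<k. 2 * (real s + h + real i))"
    unfolding pochhammer_prod atLeast0LessThan using assms by (intro prod_mono) auto
  also have "\<dots> = 2 ^ k * pochhammer (real s + h) k"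
    by (simp only: prod.distrib prod_constant card_lessThan pochhammer_prod atLeast0LessThan)
  finally have ratio_k: "pochhammer (real (2 * s) + 1) k / pochhammer (real s + h) k \<le> 2 ^ k"
    using assms by (simp add: divide_le_eq pochhammer_pos)
  have "pochhammer (1 / 2) s \<le> pochhammer h s"
    unfolding pochhammer_prod using assms by (intro prod_mono) auto
  then have ratio_s: "pochhammer (1 / 2) s / pochhammer h s \<le> 1"
    using assms by (simp add: pochhammer_pos)
  have "0 < h"
    using assms by simp
  then have "eig_weight h k s \<le> (2 ^ k * 1) * (Gamma (1 / 2) / Gamma h)"
    unfolding eig_weight_pochhammer[OF \<open>0 < h\<close>]
    using ratio_k ratio_s pochhammer_pos[of "1 / 2 :: real" s] pochhammer_pos[of h s]
    by (intro mult_right_mono mult_mono) auto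
  then show ?thesis
    by simp
qed

lemma eig_weight_0_ge:
  assumes "0 < h" "h \<le> real n + 1"
  shows "Gamma (1 / 2) / (Gamma h * 2 ^ n) * (1 / 2) ^ k \<le> eig_weight h k 0"
proof -
  have "Gamma (1 / 2) / (Gamma h * 2 ^ n) * (1 / 2) ^ k
      = fact k * (Gamma (1 / 2) / Gamma h) / (2 ^ (n + k) * fact k)"
    by (simp add: power_add power_divide field_simps)
  also have "\<dots> \<le> fact k * (Gamma (1 / 2) / Gamma h) / pochhammer h k"
    using assms pochhammer_le_pow2_fact[of h n k] pochhammer_pos[of h k]
    by (intro divide_left_mono) auto
  also have "\<dots> = eig_weight h k 0"
    using assms by (simp add: eig_weight_pochhammer pochhammer_fact)
  finally show ?thesis .
qed

lemma eig_series_bound: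
  fixes b :: "nat \<Rightarrow> real" and a k :: nat
  assumes "1 / 2 \<le> h" "0 \<le> r" "r < 1" and b_nonneg: "\<And>m. 0 \<le> b m" and b: "\<And>m. b m \<le> c * r ^ m"
  defines "S \<equiv> (\<Sum>s. (real s + 1) ^ a * (r ^ 2) ^ s)"
  shows "summable (\<lambda>s. pow_coeff b (2 * s + k) (Suc a) * eig_weight h k s)"
    and "(\<Sum>s. pow_coeff b (2 * s + k) (Suc a) * eig_weight h k s)
           \<le> c ^ Suc a * 2 ^ (a + k) * (Gamma (1 / 2) / Gamma h) * (real k + 1) ^ a * r ^ k * S"
proof -
  define G where "G = Gamma (1 / 2) / Gamma h"
  define T where "T s = pow_coeff b (2 * s + k) (Suc a) * eig_weight h k s" for s
  define K where "K = c ^ Suc a * 2 ^ (a + k) * G * (real k + 1) ^ a * r ^ k"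
  define B where "B s = K * ((real s + 1) ^ a * (r ^ 2) ^ s)" for s
  have "0 \<le> c"
    using b_nonneg[of 0] b[of 0] by simp
  have "0 < h" "0 \<le> G"
    using assms(1) by (auto simp: G_def)
  have coeff_nonneg: "0 \<le> pow_coeff b j (Suc a)" for j
    unfolding pow_coeff_def by (rule fps_power_nth_nonneg) (rule b_nonneg)
  have T_nonneg: "0 \<le> T s" for s
    unfolding T_def using coeff_nonneg eig_weight_nonneg[OF \<open>0 < h\<close>] by simp
  have T_le_B: "T s \<le> B s" for s
  proof -
    have "T s \<le> (c ^ Suc a * r ^ (2 * s + k) * (real (2 * s + k) + 1) ^ a) * (2 ^ k * G)"
      unfolding T_def G_def
      using fps_power_nth_upper[of b c r a "2 * s + k", OF b_nonneg b \<open>0 \<le> r\<close>]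
        coeff_nonneg eig_weight_le[OF assms(1)] eig_weight_nonneg[OF \<open>0 < h\<close>] \<open>0 \<le> c\<close> \<open>0 \<le> r\<close>
      by (intro mult_mono) (auto simp: pow_coeff_def simp del: power_Suc)
    also have "\<dots> \<le> (c ^ Suc a * r ^ (2 * s + k) * (2 * (real s + 1) * (real k + 1)) ^ a) * (2 ^ k * G)"
      using \<open>0 \<le> c\<close> \<open>0 \<le> r\<close> \<open>0 \<le> G\<close>
      by (intro mult_right_mono mult_left_mono power_mono) (auto simp: algebra_simps)
    also have "\<dots> = B s"
    proof -
      have "(2 * (real s + 1) * (real k + 1)) ^ a = 2 ^ a * (real s + 1) ^ a * (real k + 1) ^ a"
        by (simp only: power_mult_distrib)
      moreover have "r ^ (2 * s + k) = (r ^ 2) ^ s * r ^ k"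
        by (simp add: power_add power_mult)
      ultimately show ?thesis
        unfolding B_def K_def by (simp add: power_add ac_simps)
    qed
    finally show ?thesis .
  qed
  have "summable (\<lambda>s. (real s + 1) ^ a * (r ^ 2) ^ s)"
    using assms(2,3) by (intro summable_power_times_geometric) (auto simp: power_less_one_iff)
  then have "summable B" and sum_B: "(\<Sum>s. B s) = K * S"
    unfolding B_def S_def by (auto intro: summable_mult simp: suminf_mult)
  then have "summable T"
    using T_nonneg T_le_B by (intro summable_comparison_test[OF _ \<open>summable B\<close>]) auto
  then show "summable (\<lambda>s. pow_coeff b (2 * s + k) (Suc a) * eig_weight h k s)"
    unfolding T_def .
  have "(\<Sum>s. T s) \<le> (\<Sum>s. B s)"
    using \<open>summable T\<close> \<open>summable B\<close> T_le_B by (intro suminf_le) auto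
  then show "(\<Sum>s. pow_coeff b (2 * s + k) (Suc a) * eig_weight h k s)
           \<le> c ^ Suc a * 2 ^ (a + k) * (Gamma (1 / 2) / Gamma h) * (real k + 1) ^ a * r ^ k * S"
    unfolding T_def sum_B K_def G_def .
qed

lemma eig_eq_weighted_series:
  "eig d b k \<alpha> = sphere_area (d - 2) * Gamma ((real d - 1) / 2) / 2 ^ (k + 1) *
     (\<Sum>s. pow_coeff b (2 * s + k) \<alpha> * eig_weight (real d / 2) k s)"
  unfolding eig_def eig_weight_def by (simp add: mult.assoc)

lemma sphere_factor_pos:
  assumes "2 \<le> d"
  shows "0 < sphere_area (d - 2) * Gamma ((real d - 1) / 2)"
proof -
  have "0 < Gamma ((real (d - 2) + 1) / 2)"
    by (intro Gamma_real_pos) simp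
  then have "0 < sphere_area (d - 2)"
    unfolding sphere_area_def by (intro divide_pos_pos) simp_all
  moreover have "0 < Gamma ((real d - 1) / 2)"
    using assms by (intro Gamma_real_pos) simp
  ultimately show ?thesis
    by (rule mult_pos_pos)
qed

lemma eig_upper_bound:
  assumes "2 \<le> d" "0 \<le> r" "r < 1" "0 < c" "1 \<le> \<alpha>"
  shows "\<exists>C>0. \<forall>b. (\<forall>m. 0 \<le> b m \<and> b m \<le> c * r ^ m) \<longrightarrow>
           (\<forall>k. eig d b k \<alpha> \<le> C * (real k + 1) ^ (\<alpha> - 1) * r ^ k)"
proof -
  obtain a where \<alpha>: "\<alpha> = Suc a"
    using assms(5) by (cases \<alpha>) auto
  define A where "A = sphere_area (d - 2) * Gamma ((real d - 1) / 2)"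
  define G where "G = Gamma (1 / 2) / Gamma (real d / 2)"
  define S where "S = (\<Sum>s. (real s + 1) ^ a * (r ^ 2) ^ s)"
  define C where "C = A / 2 * c ^ \<alpha> * 2 ^ a * G * S"
  have "summable (\<lambda>s. (real s + 1) ^ a * (r ^ 2) ^ s)"
    using assms(2,3) by (intro summable_power_times_geometric) (auto simp: power_less_one_iff)
  then have "(\<Sum>s\<in>{0}. (real s + 1) ^ a * (r ^ 2) ^ s) \<le> S"
    unfolding S_def using assms(2) by (intro sum_le_suminf) auto
  then have "0 < C"
    unfolding C_def A_def G_def using sphere_factor_pos[OF assms(1)] assms(1,4) by simp
  moreover have "eig d b k \<alpha> \<le> C * (real k + 1) ^ (\<alpha> - 1) * r ^ k"
    if b: "\<forall>m. 0 \<le> b m \<and> b m \<le> c * r ^ m" for b k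
  proof -
    have "eig d b k \<alpha> \<le> A / 2 ^ (k + 1) * (c ^ Suc a * 2 ^ (a + k) * G * (real k + 1) ^ a * r ^ k * S)"
      unfolding eig_eq_weighted_series A_def[symmetric] G_def S_def \<alpha>
      using b assms(1-3) sphere_factor_pos[OF assms(1)]
      by (intro mult_left_mono eig_series_bound(2)) (auto simp: A_def)
    also have "\<dots> = C * (real k + 1) ^ (\<alpha> - 1) * r ^ k"
      unfolding C_def \<alpha> by (simp add: power_add)
    finally show ?thesis .
  qed
  ultimately show ?thesis
    by blast
qed

lemma eig_lower_bound:
  assumes "2 \<le> d" "0 \<le> r" "r < 1" "0 < c" "1 \<le> \<alpha>"
  shows "\<exists>C>0. \<forall>b. (\<forall>m. c * r ^ m \<le> b m \<and> b m \<le> c' * r ^ m) \<longrightarrow>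
           (\<forall>k. C * (r / 4) ^ k \<le> eig d b k \<alpha>)"
proof -
  obtain a where \<alpha>: "\<alpha> = Suc a"
    using assms(5) by (cases \<alpha>) auto
  define A where "A = sphere_area (d - 2) * Gamma ((real d - 1) / 2)"
  define G where "G = Gamma (1 / 2) / (Gamma (real d / 2) * 2 ^ (d - 1))"
  define C where "C = A / 2 * c ^ \<alpha> * G"
  have "0 < A" "0 < G"
    unfolding A_def G_def using sphere_factor_pos[OF assms(1)] assms(1) by auto
  then have "0 < C"
    unfolding C_def using assms(4) by simp
  moreover have "C * (r / 4) ^ k \<le> eig d b k \<alpha>"
    if b: "\<forall>m. c * r ^ m \<le> b m \<and> b m \<le> c' * r ^ m" for b k
  proof -
    define T where "T s = pow_coeff b (2 * s + k) \<alpha> * eig_weight (real d / 2) k s" for s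
    have b_nonneg: "0 \<le> b m" for m
      using b assms(2,4) by (meson order.trans zero_le_mult_iff zero_le_power less_imp_le)
    have T_nonneg: "0 \<le> T s" for s
      unfolding T_def pow_coeff_def using b_nonneg assms(1)
      by (intro mult_nonneg_nonneg fps_power_nth_nonneg eig_weight_nonneg) auto
    have "summable T"
      unfolding T_def \<alpha> using b b_nonneg assms(1-3) by (intro eig_series_bound(1)) auto
    have "C * (r / 4) ^ k = A / 2 ^ (k + 1) * (c ^ \<alpha> * r ^ k * (G * (1 / 2) ^ k))"
      unfolding C_def by (simp add: power_divide field_simps flip: power_mult_distrib)
    also have "\<dots> \<le> A / 2 ^ (k + 1) * T 0"
      unfolding T_def pow_coeff_def G_def \<alpha>
      using fps_power_nth_lower[of c r b a k] eig_weight_0_ge[of "real d / 2" "d - 1" k] b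
        fps_power_nth_nonneg[of b "Suc a" k, OF b_nonneg] assms(1,2,4) \<open>0 < A\<close> \<open>0 < G\<close>
      by (intro mult_left_mono mult_mono) (auto simp: of_nat_diff G_def simp del: power_Suc)
    also have "\<dots> \<le> A / 2 ^ (k + 1) * (\<Sum>s. T s)"
      using \<open>summable T\<close> T_nonneg sum_le_suminf[of T "{0}"] \<open>0 < A\<close>
      by (intro mult_left_mono) auto
    also have "\<dots> = eig d b k \<alpha>"
      unfolding eig_eq_weighted_series T_def A_def ..
    finally show ?thesis .
  qed
  ultimately show ?thesis
    by blast
qed

theorem mainTheorem4:
  fixes d :: nat and r c\<^sub>1 c\<^sub>2 :: real and \<alpha> :: nat
  assumes "d \<ge> 2" and "0 < r" and "r < 1" and "0 < c\<^sub>2" and "c\<^sub>2 \<le> c\<^sub>1" and "\<alpha> \<ge> 1"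
  shows "\<exists>C\<^sub>1 C\<^sub>2 :: real. C\<^sub>1 > 0 \<and> C\<^sub>2 > 0 \<and>
    (\<forall>(f\<^sub>1 :: real \<Rightarrow> real) (b :: nat \<Rightarrow> real).
       (\<forall>t\<in>{-1..1}. (\<lambda>m. b m * t ^ m) sums f\<^sub>1 t) \<longrightarrow>
       (\<forall>m. c\<^sub>2 * r ^ m \<le> b m \<and> b m \<le> c\<^sub>1 * r ^ m) \<longrightarrow>
       (\<forall>m. C\<^sub>2 * (r / 4) ^ m \<le> eig d b m \<alpha> \<and>
            eig d b m \<alpha> \<le> C\<^sub>1 * (real m + 1) ^ (\<alpha> - 1) * r ^ m))"
proof -
  obtain C\<^sub>1 where "C\<^sub>1 > 0" and upper: "\<And>b. \<forall>m. 0 \<le> b m \<and> b m \<le> c\<^sub>1 * r ^ m \<Longrightarrow>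
      \<forall>k. eig d b k \<alpha> \<le> C\<^sub>1 * (real k + 1) ^ (\<alpha> - 1) * r ^ k"
    using eig_upper_bound[of d r c\<^sub>1 \<alpha>] assms by auto
  obtain C\<^sub>2 where "C\<^sub>2 > 0" and lower: "\<And>b. \<forall>m. c\<^sub>2 * r ^ m \<le> b m \<and> b m \<le> c\<^sub>1 * r ^ m \<Longrightarrow>
      \<forall>k. C\<^sub>2 * (r / 4) ^ k \<le> eig d b k \<alpha>"
    using eig_lower_bound[of d r c\<^sub>2 \<alpha> c\<^sub>1] assms by auto
  have "C\<^sub>2 * (r / 4) ^ m \<le> eig d b m \<alpha> \<and> eig d b m \<alpha> \<le> C\<^sub>1 * (real m + 1) ^ (\<alpha> - 1) * r ^ m"
    if b: "\<forall>m. c\<^sub>2 * r ^ m \<le> b m \<and> b m \<le> c\<^sub>1 * r ^ m" for b m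
  proof
    show "C\<^sub>2 * (r / 4) ^ m \<le> eig d b m \<alpha>"
      using lower[OF b] by blast
    have "\<forall>m. 0 \<le> b m \<and> b m \<le> c\<^sub>1 * r ^ m"
      using b assms(2,4) by (meson order.trans zero_le_mult_iff zero_le_power less_imp_le)
    then show "eig d b m \<alpha> \<le> C\<^sub>1 * (real m + 1) ^ (\<alpha> - 1) * r ^ m"
      using upper by blast
  qed
  then show ?thesis
    using \<open>C\<^sub>1 > 0\<close> \<open>C\<^sub>2 > 0\<close> by blast
qed

end
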